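(* There are infinitely many positive integers $n$ for which there exists a function $\sigma\colon E(K_{4n})\to\{-1,1\}$ with $\sigma\left(E(K_{4n})\right)=2$ such that $\sigma(M)\neq 0$ for every perfect matching $M$ in $K_{4n}$.
   Context: $K_{4n}$ denotes the complete graph on $4n$ vertices and $E(K_{4n})$ its edge set. For a set $F$ of edges, $\sigma(F)=\sum_{e\in F}\sigma(e)$. *)

theory Defs
  imports Main
begin

definition complete_edges :: "nat \<Rightarrow> nat set set" where
  "complete_edges m = {e. e \<subseteq> {0..<m} \<and> card e = 2}"

definition perfect_matching :: "nat \<Rightarrow> nat set set \<Rightarrow> bool" where
  "perfect_matching m M \<longleftrightarrow> M \<subseteq> complete_edges m \<and>
     (\<forall>v \<in> {0..<m}. \<exists>!e. e \<in> M \<and> v \<in> e)"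

definition sigma_sum :: "(nat set \<Rightarrow> int) \<Rightarrow> nat set set \<Rightarrow> int" where
  "sigma_sum \<sigma> F = (\<Sum>e\<in>F. \<sigma> e)"

end

theory Submission
  imports Defs "HOL-Library.Infinite_Set"
begin

text \<open>Take \<sigma>(e) = -1 on the edges of the cut between a vertex set A of size a and its
complement in K_m, and +1 elsewhere. Counting monochromatic edges gives
2 \<sigma>(E(K_m)) = (2a - m)^2 - m, and since (-1)^c \<equiv> 1 + 2c (mod 4), every perfect matching M
has \<sigma>(M) \<equiv> |M| + 2a (mod 4). For m = 4n with n = k^2 - 1, k odd, and a = 2n + k, the first
identity gives \<sigma>(E) = 2 and the second \<sigma>(M) \<equiv> 2 (mod 4).\<close>

definition cut_sign :: "nat set \<Rightarrow> nat set \<Rightarrow> int" where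
  "cut_sign A e = (-1) ^ card (e \<inter> A)"

lemma neg_one_power_mod_4: "(-1::int) ^ c mod 4 = (1 + 2 * int c) mod 4"
proof (cases "even c")
  case True
  then obtain t where "c = 2 * t" by blast
  then show ?thesis by simp
next
  case False
  then obtain t where "c = 2 * t + 1" by (blast elim: oddE)
  then show ?thesis by simp
qed

lemma finite_complete_edges: "finite (complete_edges m)"
  unfolding complete_edges_def by (rule finite_subset[of _ "Pow {0..<m}"]) auto

lemma card_complete_edges: "card (complete_edges m) = m choose 2"
  unfolding complete_edges_def using n_subsets[of "{0..<m}" 2] by simp

lemma cut_sign_edge:
  assumes "card e = 2"
  shows "cut_sign A e = (if e \<subseteq> A \<or> e \<inter> A = {} then 1 else -1)"
proof -
  have "finite e" using assms by (metis card.infinite zero_neq_numeral)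
  show ?thesis
  proof (cases "e \<subseteq> A \<or> e \<inter> A = {}")
    case True
    then have "e \<inter> A = e \<or> e \<inter> A = {}" by blast
    then show ?thesis using assms unfolding cut_sign_def by auto
  next
    case False
    then have "e \<inter> A \<subset> e" "e \<inter> A \<noteq> {}" by blast+
    then have "card (e \<inter> A) < 2" "card (e \<inter> A) > 0"
      using psubset_card_mono[OF \<open>finite e\<close>] assms \<open>finite e\<close> by (auto simp: card_gt_0_iff)
    then have "card (e \<inter> A) = 1" by simp
    then show ?thesis using False unfolding cut_sign_def by simp
  qed
qed

lemma card_monochromatic_edges:
  assumes "A \<subseteq> {0..<m}"
  shows "card {e \<in> complete_edges m. e \<subseteq> A \<or> e \<inter> A = {}}
           = (card A choose 2) + ((m - card A) choose 2)"
proof -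
  define B where "B = {0..<m} - A"
  have split: "{e \<in> complete_edges m. e \<subseteq> A \<or> e \<inter> A = {}}
                 = {e. e \<subseteq> A \<and> card e = 2} \<union> {e. e \<subseteq> B \<and> card e = 2}"
    using assms unfolding complete_edges_def B_def by auto
  have disjoint: "{e. e \<subseteq> A \<and> card e = 2} \<inter> {e. e \<subseteq> B \<and> card e = 2} = {}"
    unfolding B_def by (force simp: card_2_iff)
  have "card B = m - card A"
    unfolding B_def using assms by (simp add: card_Diff_subset finite_subset)
  moreover have "finite A" "finite B"
    using assms unfolding B_def by (auto intro: finite_subset)
  ultimately show ?thesis
    unfolding split using card_Un_disjoint[OF _ _ disjoint] by (simp add: n_subsets)
qed

lemma int_two_times_choose_2: "2 * int (x choose 2) = int x * (int x - 1)"
proof -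
  have "even (x * (x - 1))" by (cases "even x") auto
  then have "int (2 * (x choose 2)) = int (x * (x - 1))" unfolding choose_two by simp
  then show ?thesis by (cases "x = 0") simp_all
qed

lemma sigma_sum_cut_sign_complete_edges:
  assumes "A \<subseteq> {0..<m}"
  shows "2 * sigma_sum (cut_sign A) (complete_edges m) = (2 * int (card A) - int m)^2 - int m"
proof -
  define E where "E = complete_edges m"
  define P where "P = {e. e \<subseteq> A \<or> e \<inter> A = {}}"
  have "card A \<le> m" using card_mono[OF finite_atLeastLessThan assms] by simp
  have "sigma_sum (cut_sign A) E = (\<Sum>e\<in>E. if e \<in> P then 1 else -1)"
    unfolding sigma_sum_def E_def P_def complete_edges_def
    by (rule sum.cong) (simp_all add: cut_sign_edge)
  also have "\<dots> = int (card (E \<inter> P)) - int (card (E - P))"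
    using finite_complete_edges unfolding E_def by (simp add: sum.If_cases Diff_eq)
  also have "\<dots> = 2 * int (card (E \<inter> P)) - int (card E)"
    using card_Int_Diff[of E P] finite_complete_edges unfolding E_def by simp
  finally have "2 * sigma_sum (cut_sign A) E
      = 2 * (2 * int (card A choose 2)) + 2 * (2 * int ((m - card A) choose 2))
        - 2 * int (m choose 2)"
    using card_monochromatic_edges[OF assms] unfolding E_def P_def card_complete_edges
    by (simp add: Collect_conj_eq Int_commute)
  then show ?thesis
    unfolding E_def int_two_times_choose_2 using \<open>card A \<le> m\<close>
    by (simp add: of_nat_diff power2_eq_square algebra_simps)
qed

lemma perfect_matching_sum_card_Int:
  assumes pm: "perfect_matching m M" and S: "S \<subseteq> {0..<m}"
  shows "(\<Sum>e\<in>M. card (e \<inter> S)) = card S"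
proof -
  have unique: "\<exists>!e. e \<in> M \<and> v \<in> e" if "v \<in> S" for v
    using pm S that unfolding perfect_matching_def by blast
  have "finite M"
    using pm finite_complete_edges finite_subset unfolding perfect_matching_def by blast
  moreover have "\<forall>e\<in>M. finite (e \<inter> S)" using S finite_subset by blast
  moreover have "\<forall>e\<in>M. \<forall>e'\<in>M. e \<noteq> e' \<longrightarrow> (e \<inter> S) \<inter> (e' \<inter> S) = {}"
    using unique by blast
  ultimately have "card (\<Union>e\<in>M. e \<inter> S) = (\<Sum>e\<in>M. card (e \<inter> S))"
    by (rule card_UN_disjoint)
  moreover have "(\<Union>e\<in>M. e \<inter> S) = S" using unique by blast
  ultimately show ?thesis by simp
qed

lemma card_perfect_matching:
  assumes pm: "perfect_matching m M"
  shows "2 * card M = m"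
proof -
  have edges: "e \<inter> {0..<m} = e \<and> card e = 2" if "e \<in> M" for e
    using pm that unfolding perfect_matching_def complete_edges_def by auto
  have "m = (\<Sum>e\<in>M. card (e \<inter> {0..<m}))"
    using perfect_matching_sum_card_Int[OF pm, of "{0..<m}"] by simp
  also have "\<dots> = (\<Sum>e\<in>M. 2)" using edges by simp
  finally show ?thesis by simp
qed

lemma sigma_sum_cut_sign_perfect_matching_mod_4:
  assumes pm: "perfect_matching m M" and A: "A \<subseteq> {0..<m}"
  shows "sigma_sum (cut_sign A) M mod 4 = (int (card M) + 2 * int (card A)) mod 4"
proof -
  have "sigma_sum (cut_sign A) M mod 4 = (\<Sum>e\<in>M. cut_sign A e mod 4) mod 4"
    unfolding sigma_sum_def by (simp add: mod_sum_eq)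
  also have "\<dots> = (\<Sum>e\<in>M. (1 + 2 * int (card (e \<inter> A))) mod 4) mod 4"
    unfolding cut_sign_def neg_one_power_mod_4 ..
  also have "\<dots> = (int (card M) + 2 * int (\<Sum>e\<in>M. card (e \<inter> A))) mod 4"
    by (simp add: mod_sum_eq sum.distrib sum_distrib_left)
  finally show ?thesis
    using perfect_matching_sum_card_Int[OF pm A] by simp
qed

lemma cut_sign_witness:
  assumes k: "odd k" and n: "n + 1 = k^2" "n > 0"
  shows "\<exists>\<sigma> :: nat set \<Rightarrow> int.
       (\<forall>e \<in> complete_edges (4*n). \<sigma> e \<in> {-1, 1}) \<and>
       sigma_sum \<sigma> (complete_edges (4*n)) = 2 \<and>
       (\<forall>M. perfect_matching (4*n) M \<longrightarrow> sigma_sum \<sigma> M \<noteq> 0)"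
proof (intro exI conjI allI impI)
  define A where "A = {0..<2*n + k}"
  have "k \<ge> 3" using k n by (cases "k = 1") (auto elim!: oddE)
  then have "3 * k \<le> k^2" by (simp add: power2_eq_square)
  then have "k \<le> 2*n" using n by linarith
  then have A_sub: "A \<subseteq> {0..<4*n}" unfolding A_def by auto
  show "\<forall>e \<in> complete_edges (4*n). cut_sign A e \<in> {-1, 1}"
    unfolding cut_sign_def by (simp add: minus_one_power_iff)
  have "2 * sigma_sum (cut_sign A) (complete_edges (4*n)) = 4 * int k ^ 2 - 4 * int n"
    using sigma_sum_cut_sign_complete_edges[OF A_sub] unfolding A_def
    by (simp add: power2_eq_square algebra_simps)
  also have "\<dots> = 4" using n by (simp flip: of_nat_power)
  finally show "sigma_sum (cut_sign A) (complete_edges (4*n)) = 2" by simp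
  fix M assume pm: "perfect_matching (4*n) M"
  have "odd (n + 1)" using k n by simp
  then have "even n" by simp
  then have "(int (card M) + 2 * int (card A)) mod 4 = 2"
    using card_perfect_matching[OF pm] k unfolding A_def by simp presburger
  then show "sigma_sum (cut_sign A) M \<noteq> 0"
    using sigma_sum_cut_sign_perfect_matching_mod_4[OF pm A_sub] by auto
qed

theorem proposition2:
  shows "infinite {n::nat. n > 0 \<and>
    (\<exists>\<sigma> :: nat set \<Rightarrow> int.
       (\<forall>e \<in> complete_edges (4*n). \<sigma> e \<in> {-1, 1}) \<and>
       sigma_sum \<sigma> (complete_edges (4*n)) = 2 \<and>
       (\<forall>M. perfect_matching (4*n) M \<longrightarrow> sigma_sum \<sigma> M \<noteq> 0))}"
  (is "infinite ?S")
  unfolding infinite_nat_iff_unbounded_le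
proof
  fix N :: nat
  define k where "k = 2*N + 3"
  have "3 \<le> k" unfolding k_def by simp
  then have "3 * k \<le> k^2" by (simp add: power2_eq_square)
  then have "odd k" "(k^2 - 1) + 1 = k^2" "k^2 - 1 > 0" "k^2 - 1 \<ge> N"
    unfolding k_def by auto
  then show "\<exists>n\<ge>N. n \<in> ?S"
    using cut_sign_witness by blast
qed

end
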